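(* Let $(f_0, M_0, \Lambda_0, \mathcal{Q}_0)$ be a SIMDG with induced set $\mathcal{P}_0$ and training distribution $P_{\mathrm{tr}}$, let $\mathcal{F}$ be a class of measurable functions $\mathbb{R}^p\to\mathbb{R}$, let $\mathcal{I}_0$ be the set of invariant functions in $\mathcal{F}$, and let $f_\star\in\mathcal{I}_0$ be the BCF, as in the context. Suppose that (i) for all $f,g\in\mathcal{F}$ and all $P\in\mathcal{P}_0$, $f(X)=g(X)$ $P_{\mathrm{tr}}$-a.s. implies $f(X)=g(X)$ $P$-a.s.; and (ii) $\inf_{P\in\mathcal{P}_0}\mathrm{E}_P\big[(\mathrm{E}_P[\gamma_0(V)\mid R^\top X]-\mathrm{E}_P[\gamma_0(V)\mid X])^2\big]=0$. Then, with $\mathcal{R}(P,f):=\mathrm{E}_P[(Y-f(X))^2]$, $$\mathcal{R}(P_{\mathrm{tr}},f_\star)=\inf_{f\in\mathcal{I}_0}\mathcal{R}(P_{\mathrm{tr}},f).$$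
   Context: Fix integers $p,r\ge 1$. A SIMDG is a tuple $(f_0, M_0, \Lambda_0, \mathcal{Q}_0)$ where $f_0:\mathbb{R}^p\to\mathbb{R}$ is measurable, $M_0\in\mathbb{R}^{p\times r}$, $\Lambda_0$ is a distribution on $\mathbb{R}^{1+p}$ such that $(U,V)\sim\Lambda_0$ satisfies $\mathrm{E}[(U,V)]=0$ and $\mathrm{E}[\|(U,V)\|_2^2]<\infty$, and $\mathcal{Q}_0$ is a set of distributions on $\mathbb{R}^r$. For each $Q\in\mathcal{Q}_0$ the model induces a distribution $P$ of $(U,V,X,Y,Z)$ by drawing $((U,V),Z)\sim\Lambda_0\otimes Q$ and setting $X = M_0 Z + V$, $Y = f_0(X)+U$; $\mathcal{P}_0$ is the set of all such induced distributions. Standing setting: $\sup_{P\in\mathcal{P}_0}\mathrm{E}_P[f_0(X)]^2<\infty$; $Q_{\mathrm{tr}}\in\mathcal{Q}_0$ satisfies $\mathrm{E}_{Q_{\mathrm{tr}}}[Z]=0$ and $\mathrm{E}_{Q_{\mathrm{tr}}}[ZZ^\top]\succ 0$; $P_{\mathrm{tr}}$ is the distribution induced by $Q_{\mathrm{tr}}$. A function $f\in\mathcal{F}$ is invariant if the distribution of $Y-f(X)$ under $P_{\mathrm{tr}}$ equals its distribution under $P$ for every $P\in\mathcal{P}_0$; $\mathcal{I}_0$ is the set of invariant $f\in\mathcal{F}$. Let $q=\mathrm{rank}(M_0)$; if $q<p$, $R\in\mathbb{R}^{p\times(p-q)}$ has columns forming an orthonormal basis of $\ker(M_0^\top)$,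 and if $q=p$, $R$ is the zero vector in $\mathbb{R}^{p\times 1}$. $\gamma_0(v):=\mathrm{E}_{P_{\mathrm{tr}}}[U\mid V=v]$. The BCF is $f_\star(x):=f_0(x)+\mathrm{E}_{P_{\mathrm{tr}}}[\gamma_0(V)\mid R^\top X = R^\top x]$, defined for $P_{\mathrm{tr}}$-a.e. $x$. *)

theory Defs
  imports "HOL-Analysis.Analysis" "HOL-Probability.Probability"
begin

type_synonym ('p,'r) obs = "real \<times> (real^'p) \<times> (real^'p) \<times> real \<times> (real^'r)"

definition obsU :: "('p::finite,'r::finite) obs \<Rightarrow> real" where "obsU w = fst w"
definition obsV :: "('p::finite,'r::finite) obs \<Rightarrow> real^'p" where "obsV w = fst (snd w)"
definition obsX :: "('p::finite,'r::finite) obs \<Rightarrow> real^'p" where "obsX w = fst (snd (snd w))"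
definition obsY :: "('p::finite,'r::finite) obs \<Rightarrow> real" where "obsY w = fst (snd (snd (snd w)))"
definition obsZ :: "('p::finite,'r::finite) obs \<Rightarrow> real^'r" where "obsZ w = snd (snd (snd (snd w)))"

definition simdg_law ::
  "(real^'p \<Rightarrow> real) \<Rightarrow> real^'r^'p \<Rightarrow> (real \<times> (real^'p)) measure \<Rightarrow> (real^'r) measure
     \<Rightarrow> ('p::finite,'r::finite) obs measure" where
  "simdg_law f0 M0 Lam Q =
     distr (Lam \<Otimes>\<^sub>M Q) borel
       (\<lambda>((u,v),z). (u, v, M0 *v z + v, f0 (M0 *v z + v) + u, z))"

definition invariant_fun ::
  "('p::finite,'r::finite) obs measure \<Rightarrow> ('p,'r) obs measure set \<Rightarrow> (real^'p \<Rightarrow> real) \<Rightarrow> bool" where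
  "invariant_fun Ptr P0 f \<longleftrightarrow>
     (\<forall>P\<in>P0. distr Ptr borel (\<lambda>w. obsY w - f (obsX w)) = distr P borel (\<lambda>w. obsY w - f (obsX w)))"

definition risk :: "('p::finite,'r::finite) obs measure \<Rightarrow> (real^'p \<Rightarrow> real) \<Rightarrow> ennreal" where
  "risk P f = (\<integral>\<^sup>+ w. ennreal ((obsY w - f (obsX w))\<^sup>2) \<partial>P)"

definition cond_exp_given ::
  "'a measure \<Rightarrow> ('a \<Rightarrow> 'b::topological_space) \<Rightarrow> ('a \<Rightarrow> real) \<Rightarrow> 'a \<Rightarrow> real" where
  "cond_exp_given P T g = real_cond_exp P (vimage_algebra (space P) T borel) g"

end

theory Submission
  imports Defs
begin

(*
  Fix f in I0 and an environment P = P_Q in P0. Since Z is independent of (U, V) and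
  R^T X = R^T V (the columns of R lie in ker M0^T), the law of (U, V, R^T X) does not
  depend on Q; hence R(Ptr, fstar) = E_P[(U - h(R^T X))^2], while invariance of f gives
  R(Ptr, f) = R(P, f) = E_P[(U - (f - f0)(X))^2]. Both are squared errors of U against
  functions of X, so Pythagoras around c = E_P[U | X] splits off the common term
  E_P[(U - c)^2]. Independence of Z also yields c = E_P[gamma0(V) | X], and transporting
  the defining property of h from Ptr yields h(R^T X) = E_P[gamma0(V) | R^T X]. Thus
    R(Ptr, fstar) <= R(Ptr, f) + E_P[(E_P[gamma0(V) | R^T X] - E_P[gamma0(V) | X])^2],
  and the infimum over P of the last term vanishes by (ii).
*)

(* Keep "transpose R *v x", the form used in the hypotheses, rather than simp's normal form "x v* R". *)
declare transpose_matrix_vector[simp del]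

lemma borel_measurable_fst[measurable]:
  "fst \<in> borel_measurable (borel :: ('a::second_countable_topology \<times> 'b::second_countable_topology) measure)"
  by (intro borel_measurable_continuous_onI continuous_on_fst continuous_on_id)

lemma borel_measurable_snd[measurable]:
  "snd \<in> borel_measurable (borel :: ('a::second_countable_topology \<times> 'b::second_countable_topology) measure)"
  by (intro borel_measurable_continuous_onI continuous_on_snd continuous_on_id)

lemma borel_measurable_matrix_vector_mult[measurable]:
  "(\<lambda>x. (A::real^'n::finite^'m::finite) *v x) \<in> borel_measurable borel"
  by (intro borel_measurable_continuous_onI linear_continuous_on matrix_vector_mul_bounded_linear)

lemma borel_measurable_obs[measurable]:
  "obsU \<in> borel_measurable borel" "obsV \<in> borel_measurable borel" "obsX \<in> borel_measurable borel"
  "obsY \<in> borel_measurable borel" "obsZ \<in> borel_measurable borel"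
  unfolding obsU_def[abs_def] obsV_def[abs_def] obsX_def[abs_def] obsY_def[abs_def] obsZ_def[abs_def]
  by measurable

lemma integrable_mult_of_square_integrable:
  fixes f g :: "'a \<Rightarrow> real"
  assumes [measurable]: "f \<in> borel_measurable M" "g \<in> borel_measurable M"
    and "integrable M (\<lambda>x. (f x)\<^sup>2)" "integrable M (\<lambda>x. (g x)\<^sup>2)"
  shows "integrable M (\<lambda>x. f x * g x)"
proof (rule Bochner_Integration.integrable_bound)
  show "integrable M (\<lambda>x. (f x)\<^sup>2 + (g x)\<^sup>2)"
    using assms(3,4) by simp
  have "\<bar>f x * g x\<bar> \<le> (f x)\<^sup>2 + (g x)\<^sup>2" for x
  proof -
    have "2 * (\<bar>f x\<bar> * \<bar>g x\<bar>) \<le> (f x)\<^sup>2 + (g x)\<^sup>2"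
      using sum_squares_bound[of "\<bar>f x\<bar>" "\<bar>g x\<bar>"] by (simp add: mult.assoc)
    moreover have "0 \<le> \<bar>f x\<bar> * \<bar>g x\<bar>"
      by simp
    ultimately show ?thesis
      unfolding abs_mult by linarith
  qed
  then show "AE x in M. norm (f x * g x) \<le> norm ((f x)\<^sup>2 + (g x)\<^sup>2)"
    by simp
qed simp

lemma square_integrable_add:
  fixes f g :: "'a \<Rightarrow> real"
  assumes [measurable]: "f \<in> borel_measurable M" "g \<in> borel_measurable M"
    and "integrable M (\<lambda>x. (f x)\<^sup>2)" "integrable M (\<lambda>x. (g x)\<^sup>2)"
  shows "integrable M (\<lambda>x. (f x + g x)\<^sup>2)"
proof -
  have "integrable M (\<lambda>x. (f x)\<^sup>2 + (g x)\<^sup>2 + 2 * (f x * g x))"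
    using assms integrable_mult_of_square_integrable[OF assms] by simp
  then show ?thesis
    by (simp add: power2_sum mult.assoc)
qed

lemma nn_integral_square_add_orthogonal:
  fixes a b :: "'a \<Rightarrow> real"
  assumes [measurable]: "a \<in> borel_measurable M" "b \<in> borel_measurable M"
    and a2: "integrable M (\<lambda>x. (a x)\<^sup>2)"
    and orth: "integrable M (\<lambda>x. (b x)\<^sup>2) \<Longrightarrow> (\<integral>x. a x * b x \<partial>M) = 0"
  shows "(\<integral>\<^sup>+x. ennreal ((a x + b x)\<^sup>2) \<partial>M)
    = (\<integral>\<^sup>+x. ennreal ((a x)\<^sup>2) \<partial>M) + (\<integral>\<^sup>+x. ennreal ((b x)\<^sup>2) \<partial>M)"
proof (cases "integrable M (\<lambda>x. (b x)\<^sup>2)")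
  case b2: True
  have ab: "integrable M (\<lambda>x. a x * b x)"
    by (rule integrable_mult_of_square_integrable) (simp_all add: a2 b2)
  have "(\<integral>x. (a x + b x)\<^sup>2 \<partial>M) = (\<integral>x. (a x)\<^sup>2 + (b x)\<^sup>2 + 2 * (a x * b x) \<partial>M)"
    by (simp add: power2_sum mult.assoc)
  also have "\<dots> = (\<integral>x. (a x)\<^sup>2 \<partial>M) + (\<integral>x. (b x)\<^sup>2 \<partial>M)"
    using a2 b2 ab orth[OF b2] by simp
  finally show ?thesis
    using a2 b2 square_integrable_add[of a M b]
    by (simp add: nn_integral_eq_integral ennreal_plus[symmetric] del: ennreal_plus)
next
  case False
  have not_ab2: "\<not> integrable M (\<lambda>x. (a x + b x)\<^sup>2)"
  proof
    assume "integrable M (\<lambda>x. (a x + b x)\<^sup>2)"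
    then have "integrable M (\<lambda>x. ((a x + b x) + - a x)\<^sup>2)"
      using a2 square_integrable_add[of "\<lambda>x. a x + b x" M "\<lambda>x. - a x"] by simp
    with False show False
      by simp
  qed
  have infinite: "(\<integral>\<^sup>+x. ennreal ((f x)\<^sup>2) \<partial>M) = \<infinity>"
    if "f \<in> borel_measurable M" "\<not> integrable M (\<lambda>x. (f x)\<^sup>2)" for f :: "'a \<Rightarrow> real"
    using that by (simp add: integrable_iff_bounded top_unique[symmetric] less_top)
  show ?thesis
    using infinite[of b] infinite[of "\<lambda>x. a x + b x"] False not_ab2 by simp
qed

lemma borel_measurable_cond_exp_given[measurable]:
  "cond_exp_given M T g \<in> borel_measurable M"
  "cond_exp_given M T g \<in> borel_measurable (vimage_algebra (space M) T borel)"
  unfolding cond_exp_given_def by simp_all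

lemma sigma_finite_subalgebra_vimage_algebra:
  assumes "prob_space M" "T \<in> measurable M N"
  shows "sigma_finite_subalgebra M (vimage_algebra (space M) T N)"
proof -
  interpret prob_space M by fact
  have "subalgebra M (vimage_algebra (space M) T N)"
    using sets_image_in_sets[OF refl assms(2)] by (simp add: subalgebra_def)
  then show ?thesis
    by (intro finite_measure_subalgebra_is_sigma_finite)
      (simp add: finite_measure_subalgebra_def finite_measure_subalgebra_axioms_def finite_measure_axioms)
qed

lemma integrable_cond_exp_given:
  assumes "prob_space M" "T \<in> borel_measurable M" "integrable M g"
  shows "integrable M (cond_exp_given M T g)"
  unfolding cond_exp_given_def
  using sigma_finite_subalgebra.real_cond_exp_int(1)[OF sigma_finite_subalgebra_vimage_algebra[OF assms(1,2)] assms(3)] .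

lemma integral_indicator_mult_cond_exp_given:
  assumes "prob_space M" and [measurable]: "T \<in> borel_measurable M" "B \<in> sets borel"
    and g: "integrable M g"
  shows "(\<integral>w. indicator B (T w) * cond_exp_given M T g w \<partial>M) = (\<integral>w. indicator B (T w) * g w \<partial>M)"
proof -
  interpret sigma_finite_subalgebra M "vimage_algebra (space M) T borel"
    using sigma_finite_subalgebra_vimage_algebra assms(1,2) .
  have "T \<in> measurable (vimage_algebra (space M) T borel) borel"
    by (rule measurable_vimage_algebra1) simp
  then have [measurable]: "(\<lambda>w. indicator B (T w) :: real) \<in> borel_measurable (vimage_algebra (space M) T borel)"
    by measurable
  have [measurable]: "g \<in> borel_measurable M"
    using g by (rule borel_measurable_integrable)
  have "integrable M (\<lambda>w. indicator B (T w) * g w)"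
    using g by (rule Bochner_Integration.integrable_bound) (auto simp: indicator_def)
  then show ?thesis
    unfolding cond_exp_given_def using g by (intro real_cond_exp_intg(2)) simp_all
qed

lemma cond_exp_given_charact:
  assumes "prob_space M" and [measurable]: "T \<in> borel_measurable M"
    and "integrable M g" "integrable M k" "k \<in> borel_measurable (vimage_algebra (space M) T borel)"
    and eq: "\<And>B. B \<in> sets borel \<Longrightarrow> (\<integral>w. indicator B (T w) * g w \<partial>M) = (\<integral>w. indicator B (T w) * k w \<partial>M)"
  shows "AE w in M. cond_exp_given M T g w = k w"
  unfolding cond_exp_given_def
proof (rule sigma_finite_subalgebra.real_cond_exp_charact)
  show "sigma_finite_subalgebra M (vimage_algebra (space M) T borel)"
    using sigma_finite_subalgebra_vimage_algebra assms(1,2) .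
  fix A assume "A \<in> sets (vimage_algebra (space M) T borel)"
  then obtain B where B: "B \<in> sets borel" and A: "A = T -` B \<inter> space M"
    by (auto simp: sets_vimage_algebra2)
  have "(\<integral>w\<in>A. f w \<partial>M) = (\<integral>w. indicator B (T w) * f w \<partial>M)" for f :: "_ \<Rightarrow> real"
    unfolding set_lebesgue_integral_def A
    by (intro Bochner_Integration.integral_cong) (auto simp: indicator_def)
  then show "(\<integral>w\<in>A. g w \<partial>M) = (\<integral>w\<in>A. k w \<partial>M)"
    using eq[OF B] by simp
qed (use assms in simp_all)

lemma nn_integral_square_error_cond_exp_given:
  assumes "prob_space M" and [measurable]: "T \<in> borel_measurable M" "U \<in> borel_measurable M" "\<phi> \<in> borel_measurable borel"
    and U2: "integrable M (\<lambda>w. (U w)\<^sup>2)"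
  shows "(\<integral>\<^sup>+w. ennreal ((U w - \<phi> (T w))\<^sup>2) \<partial>M)
    = (\<integral>\<^sup>+w. ennreal ((U w - cond_exp_given M T U w)\<^sup>2) \<partial>M)
      + (\<integral>\<^sup>+w. ennreal ((cond_exp_given M T U w - \<phi> (T w))\<^sup>2) \<partial>M)"
proof -
  interpret prob_space M by fact
  interpret sigma_finite_subalgebra M "vimage_algebra (space M) T borel"
    using sigma_finite_subalgebra_vimage_algebra assms(1,2) .
  let ?c = "cond_exp_given M T U"
  have U: "integrable M U"
    by (rule square_integrable_imp_integrable[OF _ U2]) simp
  have c2: "integrable M (\<lambda>w. (?c w)\<^sup>2)"
    unfolding cond_exp_given_def
    by (rule integrable_convex_cond_exp[where I = UNIV and q = "\<lambda>x. x\<^sup>2"])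
      (simp_all add: U U2 convex_power2)
  have [measurable]: "T \<in> measurable (vimage_algebra (space M) T borel) borel"
    by (rule measurable_vimage_algebra1) simp
  have b_F: "(\<lambda>w. ?c w - \<phi> (T w)) \<in> borel_measurable (vimage_algebra (space M) T borel)"
    by measurable
  have orth: "(\<integral>w. (U w - ?c w) * (?c w - \<phi> (T w)) \<partial>M) = 0"
    if b2: "integrable M (\<lambda>w. (?c w - \<phi> (T w))\<^sup>2)"
  proof -
    have bU: "integrable M (\<lambda>w. (?c w - \<phi> (T w)) * U w)"
      by (rule integrable_mult_of_square_integrable[OF _ _ b2 U2]) simp_all
    have bc: "integrable M (\<lambda>w. (?c w - \<phi> (T w)) * ?c w)"
      by (rule integrable_mult_of_square_integrable[OF _ _ b2 c2]) simp_all
    have "(\<integral>w. (?c w - \<phi> (T w)) * ?c w \<partial>M) = (\<integral>w. (?c w - \<phi> (T w)) * U w \<partial>M)"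
      using real_cond_exp_intg(2)[OF bU b_F] unfolding cond_exp_given_def by simp
    moreover have "(\<integral>w. (U w - ?c w) * (?c w - \<phi> (T w)) \<partial>M)
        = (\<integral>w. (?c w - \<phi> (T w)) * U w - (?c w - \<phi> (T w)) * ?c w \<partial>M)"
      by (rule Bochner_Integration.integral_cong) (simp_all add: algebra_simps)
    ultimately show ?thesis
      using bU bc by simp
  qed
  have "integrable M (\<lambda>w. (U w + - ?c w)\<^sup>2)"
    using square_integrable_add[of U M "\<lambda>w. - ?c w"] U2 c2 by simp
  then have "integrable M (\<lambda>w. (U w - ?c w)\<^sup>2)"
    by simp
  from nn_integral_square_add_orthogonal[OF _ _ this orth] show ?thesis
    by simp
qed

lemma risk_cong_distr:
  assumes "sets M = sets borel" "sets N = sets borel" "f \<in> borel_measurable borel"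
    and "distr M borel (\<lambda>w. obsY w - f (obsX w)) = distr N borel (\<lambda>w. obsY w - f (obsX w))"
  shows "risk M f = risk N f"
proof -
  have "risk K f = (\<integral>\<^sup>+t. ennreal (t\<^sup>2) \<partial>distr K borel (\<lambda>w. obsY w - f (obsX w)))"
    if [measurable_cong]: "sets K = sets borel" for K
    unfolding risk_def using assms(3) by (subst nn_integral_distr) simp_all
  from this[OF assms(1)] this[OF assms(2)] show ?thesis
    using assms(4) by simp
qed

lemma transpose_mult_eq_0_if_columns_in_kernel:
  fixes M :: "real^'r::finite^'p::finite" and R :: "real^'k::finite^'p"
  assumes "columns R \<subseteq> {x. transpose M *v x = 0}"
  shows "transpose R *v (M *v z) = 0"
proof -
  have "(transpose R *v y) $ i = column i R \<bullet> y" for y i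
    by (simp add: matrix_vector_mult_def transpose_def column_def inner_vec_def mult.commute)
  then have "(transpose R *v (M *v z)) $ i = (transpose M *v column i R) \<bullet> z" for i
    by (simp add: transpose_matrix_vector dot_lmul_matrix)
  moreover have "transpose M *v column i R = 0" for i
    using assms by (auto simp: columns_def)
  ultimately show ?thesis
    by (simp add: vec_eq_iff)
qed

lemma ennreal_le_if_le_add_INF_zero:
  fixes x y :: ennreal
  assumes "\<And>i. i \<in> I \<Longrightarrow> x \<le> y + g i" and "(INF i\<in>I. g i) = 0"
  shows "x \<le> y"
proof (rule ennreal_le_epsilon)
  fix e :: real assume "0 < e"
  then have "(INF i\<in>I. g i) < ennreal e"
    using assms(2) by simp
  then obtain i where "i \<in> I" "g i < ennreal e"
    by (auto simp: INF_less_iff)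
  then show "x \<le> y + ennreal e"
    using assms(1) by (meson add_left_mono less_imp_le order_trans)
qed

locale simdg =
  fixes f0 :: "real^'p::finite \<Rightarrow> real" and M0 :: "real^'r::finite^'p"
    and Lam :: "(real \<times> (real^'p)) measure"
  assumes f0_measurable[measurable]: "f0 \<in> borel_measurable borel"
    and prob_space_Lam: "prob_space Lam"
    and sets_Lam[measurable_cong]: "sets Lam = sets borel"
    and integrable_Lam_norm_sq: "integrable Lam (\<lambda>w. (norm w)\<^sup>2)"
begin

abbreviation law :: "(real^'r) measure \<Rightarrow> ('p,'r) obs measure" where
  "law Q \<equiv> simdg_law f0 M0 Lam Q"

definition generate :: "(real \<times> (real^'p)) \<times> (real^'r) \<Rightarrow> ('p,'r) obs" where
  "generate = (\<lambda>((u,v),z). (u, v, M0 *v z + v, f0 (M0 *v z + v) + u, z))"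

lemma obs_generate[simp]:
  "obsU (generate ((u, v), z)) = u" "obsV (generate ((u, v), z)) = v" "obsX (generate ((u, v), z)) = M0 *v z + v"
  by (simp_all add: generate_def obsU_def obsV_def obsX_def)

lemma law_eq_distr_generate: "law Q = distr (Lam \<Otimes>\<^sub>M Q) borel generate"
  unfolding simdg_law_def generate_def ..

lemma sets_law[simp, measurable_cong]: "sets (law Q) = sets borel"
  by (simp add: law_eq_distr_generate)

lemma space_law[simp]: "space (law Q) = UNIV"
  by (simp add: law_eq_distr_generate)

lemma integrable_Lam_fst_sq: "integrable Lam (\<lambda>w. (fst w)\<^sup>2)"
proof (rule Bochner_Integration.integrable_bound[OF integrable_Lam_norm_sq])
  have "(fst w)\<^sup>2 \<le> (norm w)\<^sup>2" for w :: "real \<times> (real^'p)"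
    using norm_fst_le[of "fst w" "snd w"] by (simp add: abs_le_square_iff[symmetric])
  then show "AE w in Lam. norm ((fst w)\<^sup>2) \<le> norm ((norm w)\<^sup>2)"
    by simp
qed simp

context
  fixes Q :: "(real^'r) measure"
  assumes prob_space_Q: "prob_space Q" and sets_Q[measurable_cong]: "sets Q = sets borel"
begin

lemma sets_Lam_Q: "sets (Lam \<Otimes>\<^sub>M Q) = sets borel"
  by (metis borel_prod sets_pair_measure_cong sets_Lam sets_Q)

lemma measurable_generate[measurable]: "generate \<in> measurable (Lam \<Otimes>\<^sub>M Q) borel"
proof -
  have "generate \<in> measurable ((borel \<Otimes>\<^sub>M borel) \<Otimes>\<^sub>M borel) borel"
    unfolding generate_def split_beta' by measurable
  then show ?thesis
    unfolding borel_prod measurable_cong_sets[OF sets_Lam_Q refl] .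
qed

lemma prob_space_law: "prob_space (law Q)"
  unfolding law_eq_distr_generate
  by (intro prob_space.prob_space_distr prob_space_pair prob_space_Lam prob_space_Q measurable_generate)

lemma AE_law_structural_eqs:
  "AE w in law Q. obsX w = M0 *v obsZ w + obsV w \<and> obsY w = f0 (obsX w) + obsU w"
  unfolding law_eq_distr_generate
  by (subst AE_distr_iff[OF measurable_generate])
    (auto simp: generate_def obsU_def obsV_def obsX_def obsY_def obsZ_def)

lemma
  fixes \<psi> :: "('p,'r) obs \<Rightarrow> real"
  assumes [measurable]: "\<psi> \<in> borel_measurable borel"
  shows integral_law_generate: "integral\<^sup>L (law Q) \<psi> = (\<integral>x. \<psi> (generate x) \<partial>(Lam \<Otimes>\<^sub>M Q))"
    and integrable_law_generate_iff: "integrable (law Q) \<psi> \<longleftrightarrow> integrable (Lam \<Otimes>\<^sub>M Q) (\<lambda>x. \<psi> (generate x))"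
  unfolding law_eq_distr_generate
  by (simp_all add: integral_distr integrable_distr_eq)

lemma
  fixes \<psi> :: "('p,'r) obs \<Rightarrow> real" and \<phi> :: "real \<times> (real^'p) \<Rightarrow> real"
  assumes [measurable]: "\<psi> \<in> borel_measurable borel" "\<phi> \<in> borel_measurable borel"
    and \<psi>_generate: "\<And>u v z. \<psi> (generate ((u, v), z)) = \<phi> (u, v)"
  shows integral_law_eq_integral_Lam: "integral\<^sup>L (law Q) \<psi> = integral\<^sup>L Lam \<phi>"
    and integrable_law_iff_integrable_Lam: "integrable (law Q) \<psi> \<longleftrightarrow> integrable Lam \<phi>"
proof -
  have "(\<lambda>x. \<psi> (generate x)) = (\<lambda>x. \<phi> (fst x))"
    using \<psi>_generate by (auto simp: fun_eq_iff)
  then show "integral\<^sup>L (law Q) \<psi> = integral\<^sup>L Lam \<phi>" "integrable (law Q) \<psi> \<longleftrightarrow> integrable Lam \<phi>"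
    using integral_distr[of fst "Lam \<Otimes>\<^sub>M Q" Lam \<phi>] integrable_distr_eq[of fst "Lam \<Otimes>\<^sub>M Q" Lam \<phi>]
    by (simp_all add: integral_law_generate integrable_law_generate_iff prob_space.distr_pair_fst[OF prob_space_Q])
qed

lemma nn_integral_law_eq_nn_integral_Lam:
  fixes \<psi> :: "('p,'r) obs \<Rightarrow> ennreal" and \<phi> :: "real \<times> (real^'p) \<Rightarrow> ennreal"
  assumes [measurable]: "\<psi> \<in> borel_measurable borel" "\<phi> \<in> borel_measurable borel"
    and \<psi>_generate: "\<And>u v z. \<psi> (generate ((u, v), z)) = \<phi> (u, v)"
  shows "integral\<^sup>N (law Q) \<psi> = integral\<^sup>N Lam \<phi>"
proof -
  have "(\<lambda>x. \<psi> (generate x)) = (\<lambda>x. \<phi> (fst x))"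
    using \<psi>_generate by (auto simp: fun_eq_iff)
  then show ?thesis
    using nn_integral_distr[of fst "Lam \<Otimes>\<^sub>M Q" Lam \<phi>]
    by (simp add: law_eq_distr_generate nn_integral_distr prob_space.distr_pair_fst[OF prob_space_Q])
qed

lemma integrable_law_U_sq: "integrable (law Q) (\<lambda>w. (obsU w)\<^sup>2)"
  using integrable_law_iff_integrable_Lam[of "\<lambda>w. (obsU w)\<^sup>2" "\<lambda>w. (fst w)\<^sup>2"] integrable_Lam_fst_sq
  by simp

lemma integrable_law_U: "integrable (law Q) obsU"
proof -
  interpret prob_space "law Q"
    by (rule prob_space_law)
  show ?thesis
    by (rule square_integrable_imp_integrable[OF _ integrable_law_U_sq]) simp
qed

lemma risk_law_eq:
  "risk (law Q) f = (\<integral>\<^sup>+w. ennreal ((obsU w - (f (obsX w) - f0 (obsX w)))\<^sup>2) \<partial>law Q)"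
  unfolding risk_def
  by (rule nn_integral_cong_AE) (use AE_law_structural_eqs in \<open>eventually_elim, simp add: algebra_simps\<close>)

end
end

locale simdg_training = simdg f0 M0 Lam
  for f0 :: "real^'p::finite \<Rightarrow> real" and M0 :: "real^'r::finite^'p"
    and Lam :: "(real \<times> (real^'p)) measure" +
  fixes Qtr :: "(real^'r) measure" and \<gamma>0 :: "real^'p \<Rightarrow> real"
  assumes prob_space_Qtr: "prob_space Qtr" and sets_Qtr: "sets Qtr = sets borel"
    and \<gamma>0_measurable[measurable]: "\<gamma>0 \<in> borel_measurable borel"
    and \<gamma>0_cond_exp: "AE w in law Qtr. \<gamma>0 (obsV w) = cond_exp_given (law Qtr) obsV obsU w"
begin

lemma integrable_Lam_\<gamma>0: "integrable Lam (\<lambda>y. \<gamma>0 (snd y))"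
proof -
  have "integrable (law Qtr) (cond_exp_given (law Qtr) obsV obsU)"
    using prob_space_law[OF prob_space_Qtr sets_Qtr] integrable_law_U[OF prob_space_Qtr sets_Qtr]
    by (intro integrable_cond_exp_given) simp_all
  then have "integrable (law Qtr) (\<lambda>w. \<gamma>0 (obsV w))"
    using \<gamma>0_cond_exp by (subst integrable_cong_AE) simp_all
  then show ?thesis
    using integrable_law_iff_integrable_Lam[OF prob_space_Qtr sets_Qtr, of "\<lambda>w. \<gamma>0 (obsV w)" "\<lambda>y. \<gamma>0 (snd y)"]
    by simp
qed

lemma integral_Lam_indicator_U_eq_\<gamma>0:
  assumes [measurable]: "C \<in> sets borel"
  shows "(\<integral>y. indicator C (snd y) * fst y \<partial>Lam) = (\<integral>y. indicator C (snd y) * \<gamma>0 (snd y) \<partial>Lam)"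
proof -
  have Lam_eq: "(\<integral>w. indicator C (obsV w) * g (obsU w, obsV w) \<partial>law Qtr) = (\<integral>y. indicator C (snd y) * g y \<partial>Lam)"
    if [measurable]: "g \<in> borel_measurable borel" for g :: "real \<times> (real^'p) \<Rightarrow> real"
    by (rule integral_law_eq_integral_Lam[OF prob_space_Qtr sets_Qtr]) simp_all
  have "(\<integral>w. indicator C (obsV w) * obsU w \<partial>law Qtr)
      = (\<integral>w. indicator C (obsV w) * cond_exp_given (law Qtr) obsV obsU w \<partial>law Qtr)"
    using prob_space_law[OF prob_space_Qtr sets_Qtr] integrable_law_U[OF prob_space_Qtr sets_Qtr]
    by (intro integral_indicator_mult_cond_exp_given[symmetric]) simp_all
  also have "\<dots> = (\<integral>w. indicator C (obsV w) * \<gamma>0 (obsV w) \<partial>law Qtr)"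
    using \<gamma>0_cond_exp by (intro integral_cong_AE) (auto elim: eventually_mono)
  finally show ?thesis
    using Lam_eq[of fst] Lam_eq[of "\<lambda>y. \<gamma>0 (snd y)"] by simp
qed


context
  fixes Q :: "(real^'r) measure"
  assumes prob_space_Q: "prob_space Q" and sets_Q: "sets Q = sets borel"
begin

lemma integrable_law_\<gamma>0: "integrable (law Q) (\<lambda>w. \<gamma>0 (obsV w))"
  using integrable_law_iff_integrable_Lam[OF prob_space_Q sets_Q, of "\<lambda>w. \<gamma>0 (obsV w)" "\<lambda>y. \<gamma>0 (snd y)"]
    integrable_Lam_\<gamma>0
  by simp

lemma integral_law_indicator_X_U_eq_\<gamma>0:
  assumes [measurable]: "B \<in> sets borel"
  shows "(\<integral>w. indicator B (obsX w) * obsU w \<partial>law Q) = (\<integral>w. indicator B (obsX w) * \<gamma>0 (obsV w) \<partial>law Q)"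
proof -
  interpret pair_prob_space Lam Q
    by (simp add: pair_prob_space_def pair_sigma_finite_def prob_space_Lam prob_space_Q prob_space_imp_sigma_finite)
  have Fubini: "(\<integral>w. indicator B (obsX w) * g (obsU w, obsV w) \<partial>law Q)
      = (\<integral>z. (\<integral>y. indicator B (M0 *v z + snd y) * g y \<partial>Lam) \<partial>Q)"
    if [measurable]: "g \<in> borel_measurable borel" and g: "integrable (law Q) (\<lambda>w. g (obsU w, obsV w))"
    for g :: "real \<times> (real^'p) \<Rightarrow> real"
  proof -
    have generate_eq: "(\<lambda>x. indicator B (obsX (generate x)) * g (obsU (generate x), obsV (generate x)))
        = case_prod (\<lambda>y z. indicator B (M0 *v z + snd y) * g y)"
      by (auto simp: fun_eq_iff)
    have "integrable (law Q) (\<lambda>w. indicator B (obsX w) * g (obsU w, obsV w))"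
      using g by (rule Bochner_Integration.integrable_bound) (auto simp: indicator_def)
    then have "integrable (Lam \<Otimes>\<^sub>M Q) (case_prod (\<lambda>y z. indicator B (M0 *v z + snd y) * g y))"
      by (simp add: integrable_law_generate_iff[OF prob_space_Q sets_Q] generate_eq)
    then show ?thesis
      by (simp add: integral_law_generate[OF prob_space_Q sets_Q] generate_eq integral_snd)
  qed
  have "(\<integral>y. indicator B (M0 *v z + snd y) * fst y \<partial>Lam) = (\<integral>y. indicator B (M0 *v z + snd y) * \<gamma>0 (snd y) \<partial>Lam)"
    for z
  proof -
    have [measurable]: "(\<lambda>v. M0 *v z + v) -` B \<in> sets borel"
      using measurable_sets_borel[of "\<lambda>v. M0 *v z + v" borel B] by simp
    show ?thesis
      using integral_Lam_indicator_U_eq_\<gamma>0[of "(\<lambda>v. M0 *v z + v) -` B"] by (simp add: indicator_def)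
  qed
  then show ?thesis
    using Fubini[of fst] Fubini[of "\<lambda>y. \<gamma>0 (snd y)"] integrable_law_U[OF prob_space_Q sets_Q] integrable_law_\<gamma>0
    by simp
qed

lemma cond_exp_X_\<gamma>0_eq_cond_exp_X_U:
  "AE w in law Q. cond_exp_given (law Q) obsX (\<lambda>w. \<gamma>0 (obsV w)) w = cond_exp_given (law Q) obsX obsU w"
proof (rule cond_exp_given_charact)
  show P: "prob_space (law Q)"
    by (rule prob_space_law[OF prob_space_Q sets_Q])
  have U: "integrable (law Q) obsU"
    by (rule integrable_law_U[OF prob_space_Q sets_Q])
  show "integrable (law Q) (cond_exp_given (law Q) obsX obsU)"
    using P U by (intro integrable_cond_exp_given) simp_all
  fix B :: "(real^'p) set" assume [measurable]: "B \<in> sets borel"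
  have "(\<integral>w. indicator B (obsX w) * \<gamma>0 (obsV w) \<partial>law Q) = (\<integral>w. indicator B (obsX w) * obsU w \<partial>law Q)"
    by (rule integral_law_indicator_X_U_eq_\<gamma>0[symmetric]) simp
  also have "\<dots> = (\<integral>w. indicator B (obsX w) * cond_exp_given (law Q) obsX obsU w \<partial>law Q)"
    using P U by (intro integral_indicator_mult_cond_exp_given[symmetric]) simp_all
  finally show "(\<integral>w. indicator B (obsX w) * \<gamma>0 (obsV w) \<partial>law Q)
      = (\<integral>w. indicator B (obsX w) * cond_exp_given (law Q) obsX obsU w \<partial>law Q)" .
qed (use borel_measurable_cond_exp_given(2)[of "law Q" obsX obsU] in \<open>simp_all add: integrable_law_\<gamma>0\<close>)

end

end

locale simdg_bcf = simdg_training f0 M0 Lam Qtr \<gamma>0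
  for f0 :: "real^'p::finite \<Rightarrow> real" and M0 :: "real^'r::finite^'p"
    and Lam :: "(real \<times> (real^'p)) measure" and Qtr :: "(real^'r) measure" and \<gamma>0 :: "real^'p \<Rightarrow> real" +
  fixes R :: "real^'k::finite^'p" and h :: "real^'k \<Rightarrow> real" and fstar :: "real^'p \<Rightarrow> real"
  assumes R_M0: "\<And>z. transpose R *v (M0 *v z) = 0"
    and h_measurable[measurable]: "h \<in> borel_measurable borel"
    and h_cond_exp: "AE w in law Qtr. h (transpose R *v obsX w)
      = cond_exp_given (law Qtr) (\<lambda>w. transpose R *v obsX w) (\<lambda>w. \<gamma>0 (obsV w)) w"
    and fstar_eq: "AE w in law Qtr. fstar (obsX w) = f0 (obsX w) + h (transpose R *v obsX w)"
begin

lemma transpose_R_mult_M0_add[simp]: "transpose R *v (M0 *v z + v) = transpose R *v v"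
  by (simp add: matrix_vector_right_distrib R_M0)

lemma integrable_law_Qtr_h_RX: "integrable (law Qtr) (\<lambda>w. h (transpose R *v obsX w))"
proof -
  have "integrable (law Qtr) (cond_exp_given (law Qtr) (\<lambda>w. transpose R *v obsX w) (\<lambda>w. \<gamma>0 (obsV w)))"
    using prob_space_law[OF prob_space_Qtr sets_Qtr] integrable_law_\<gamma>0[OF prob_space_Qtr sets_Qtr]
    by (intro integrable_cond_exp_given) simp_all
  then show ?thesis
    using h_cond_exp by (subst integrable_cong_AE) simp_all
qed

context
  fixes Q :: "(real^'r) measure"
  assumes prob_space_Q: "prob_space Q" and sets_Q: "sets Q = sets borel"
begin

lemma integrable_law_h_RX: "integrable (law Q) (\<lambda>w. h (transpose R *v obsX w))"
proof -
  have "integrable (law Q') (\<lambda>w. h (transpose R *v obsX w)) \<longleftrightarrow> integrable Lam (\<lambda>y. h (transpose R *v snd y))"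
    if "prob_space Q'" "sets Q' = sets borel" for Q'
    by (rule integrable_law_iff_integrable_Lam[OF that]) simp_all
  then show ?thesis
    using integrable_law_Qtr_h_RX prob_space_Q sets_Q prob_space_Qtr sets_Qtr by blast
qed

lemma cond_exp_RX_\<gamma>0:
  "AE w in law Q. cond_exp_given (law Q) (\<lambda>w. transpose R *v obsX w) (\<lambda>w. \<gamma>0 (obsV w)) w
    = h (transpose R *v obsX w)"
proof (rule cond_exp_given_charact)
  show "prob_space (law Q)"
    by (rule prob_space_law[OF prob_space_Q sets_Q])
  have "(\<lambda>w. transpose R *v w) \<circ> obsX \<in> measurable (vimage_algebra (space (law Q)) (\<lambda>w. transpose R *v obsX w) borel) borel"
    unfolding comp_def by (rule measurable_vimage_algebra1) simp
  then show "(\<lambda>w. h (transpose R *v obsX w)) \<in> borel_measurable (vimage_algebra (space (law Q)) (\<lambda>w. transpose R *v obsX w) borel)"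
    unfolding comp_def by measurable
  fix B :: "(real^'k) set" assume [measurable]: "B \<in> sets borel"
  let ?RX = "\<lambda>w. transpose R *v obsX w"
  have to_Lam: "(\<integral>w. indicator B (?RX w) * g (?RX w, obsV w) \<partial>law Q')
      = (\<integral>y. indicator B (transpose R *v snd y) * g (transpose R *v snd y, snd y) \<partial>Lam)"
    if "prob_space Q'" "sets Q' = sets borel" and [measurable]: "g \<in> borel_measurable borel"
    for Q' :: "(real^'r) measure" and g :: "(real^'k) \<times> (real^'p) \<Rightarrow> real"
    by (rule integral_law_eq_integral_Lam[OF that(1,2)]) simp_all
  have "(\<integral>w. indicator B (?RX w) * \<gamma>0 (obsV w) \<partial>law Q) = (\<integral>w. indicator B (?RX w) * \<gamma>0 (obsV w) \<partial>law Qtr)"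
    using to_Lam[OF prob_space_Q sets_Q, of "\<lambda>y. \<gamma>0 (snd y)"] to_Lam[OF prob_space_Qtr sets_Qtr, of "\<lambda>y. \<gamma>0 (snd y)"]
    by simp
  also have "\<dots> = (\<integral>w. indicator B (?RX w) * cond_exp_given (law Qtr) ?RX (\<lambda>w. \<gamma>0 (obsV w)) w \<partial>law Qtr)"
    using prob_space_law[OF prob_space_Qtr sets_Qtr] integrable_law_\<gamma>0[OF prob_space_Qtr sets_Qtr]
    by (intro integral_indicator_mult_cond_exp_given[symmetric]) simp_all
  also have "\<dots> = (\<integral>w. indicator B (?RX w) * h (?RX w) \<partial>law Qtr)"
    using h_cond_exp by (intro integral_cong_AE) (auto elim: eventually_mono)
  also have "\<dots> = (\<integral>w. indicator B (?RX w) * h (?RX w) \<partial>law Q)"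
    using to_Lam[OF prob_space_Q sets_Q, of "\<lambda>y. h (fst y)"] to_Lam[OF prob_space_Qtr sets_Qtr, of "\<lambda>y. h (fst y)"]
    by simp
  finally show "(\<integral>w. indicator B (?RX w) * \<gamma>0 (obsV w) \<partial>law Q) = (\<integral>w. indicator B (?RX w) * h (?RX w) \<partial>law Q)" .
qed (simp_all add: integrable_law_\<gamma>0[OF prob_space_Q sets_Q] integrable_law_h_RX)

lemma risk_fstar_eq: "risk (law Qtr) fstar = (\<integral>\<^sup>+w. ennreal ((obsU w - h (transpose R *v obsX w))\<^sup>2) \<partial>law Q)"
proof -
  have to_Lam: "(\<integral>\<^sup>+w. ennreal ((obsU w - h (transpose R *v obsX w))\<^sup>2) \<partial>law Q')
      = (\<integral>\<^sup>+y. ennreal ((fst y - h (transpose R *v snd y))\<^sup>2) \<partial>Lam)"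
    if "prob_space Q'" "sets Q' = sets borel" for Q' :: "(real^'r) measure"
    by (rule nn_integral_law_eq_nn_integral_Lam[OF that]) simp_all
  have "risk (law Qtr) fstar = (\<integral>\<^sup>+w. ennreal ((obsU w - h (transpose R *v obsX w))\<^sup>2) \<partial>law Qtr)"
    unfolding risk_def using AE_law_structural_eqs[OF prob_space_Qtr sets_Qtr] fstar_eq
    by (intro nn_integral_cong_AE) (auto elim: eventually_mono)
  then show ?thesis
    using to_Lam[OF prob_space_Q sets_Q] to_Lam[OF prob_space_Qtr sets_Qtr] by simp
qed

lemma risk_fstar_le:
  assumes [measurable]: "f \<in> borel_measurable borel"
    and invariant: "distr (law Qtr) borel (\<lambda>w. obsY w - f (obsX w)) = distr (law Q) borel (\<lambda>w. obsY w - f (obsX w))"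
  shows "risk (law Qtr) fstar \<le> risk (law Qtr) f
    + (\<integral>\<^sup>+w. ennreal ((cond_exp_given (law Q) (\<lambda>w. transpose R *v obsX w) (\<lambda>w. \<gamma>0 (obsV w)) w
        - cond_exp_given (law Q) obsX (\<lambda>w. \<gamma>0 (obsV w)) w)\<^sup>2) \<partial>law Q)"
proof -
  let ?c = "cond_exp_given (law Q) obsX obsU"
  have square_error: "(\<integral>\<^sup>+w. ennreal ((obsU w - \<phi> (obsX w))\<^sup>2) \<partial>law Q)
      = (\<integral>\<^sup>+w. ennreal ((obsU w - ?c w)\<^sup>2) \<partial>law Q) + (\<integral>\<^sup>+w. ennreal ((?c w - \<phi> (obsX w))\<^sup>2) \<partial>law Q)"
    if "\<phi> \<in> borel_measurable borel" for \<phi>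
    using prob_space_law[OF prob_space_Q sets_Q] integrable_law_U_sq[OF prob_space_Q sets_Q] that
    by (intro nn_integral_square_error_cond_exp_given) simp_all
  have gap: "(\<integral>\<^sup>+w. ennreal ((?c w - h (transpose R *v obsX w))\<^sup>2) \<partial>law Q)
      = (\<integral>\<^sup>+w. ennreal ((cond_exp_given (law Q) (\<lambda>w. transpose R *v obsX w) (\<lambda>w. \<gamma>0 (obsV w)) w
        - cond_exp_given (law Q) obsX (\<lambda>w. \<gamma>0 (obsV w)) w)\<^sup>2) \<partial>law Q)"
    using cond_exp_X_\<gamma>0_eq_cond_exp_X_U[OF prob_space_Q sets_Q] cond_exp_RX_\<gamma>0
    by (intro nn_integral_cong_AE) (auto elim!: eventually_elim2 simp: power2_commute)
  have "risk (law Qtr) fstar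
      = (\<integral>\<^sup>+w. ennreal ((obsU w - ?c w)\<^sup>2) \<partial>law Q) + (\<integral>\<^sup>+w. ennreal ((?c w - h (transpose R *v obsX w))\<^sup>2) \<partial>law Q)"
    using risk_fstar_eq square_error[of "\<lambda>x. h (transpose R *v x)"] by simp
  also have "(\<integral>\<^sup>+w. ennreal ((obsU w - ?c w)\<^sup>2) \<partial>law Q) \<le> risk (law Q) f"
    using risk_law_eq[OF prob_space_Q sets_Q, of f] square_error[of "\<lambda>x. f x - f0 x"] by simp
  also have "risk (law Q) f = risk (law Qtr) f"
    using invariant by (intro risk_cong_distr[symmetric]) simp_all
  finally show ?thesis
    unfolding gap by (simp add: add_right_mono)
qed

end

end

theorem corollary1:
  fixes f0 :: "real^'p::finite \<Rightarrow> real"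
    and M0 :: "real^'r::finite^'p"
    and Lam :: "(real \<times> (real^'p)) measure"
    and Q0 :: "(real^'r) measure set"
    and Qtr :: "(real^'r) measure"
    and R :: "real^'k::finite^'p"
    and F :: "(real^'p \<Rightarrow> real) set"
    and \<gamma>0 :: "real^'p \<Rightarrow> real"
    and h :: "real^'k \<Rightarrow> real"
    and fstar :: "real^'p \<Rightarrow> real"
  defines "P0 \<equiv> simdg_law f0 M0 Lam ` Q0"
    and "Ptr \<equiv> simdg_law f0 M0 Lam Qtr"
    and "I0 \<equiv> {f\<in>F. invariant_fun (simdg_law f0 M0 Lam Qtr) (simdg_law f0 M0 Lam ` Q0) f}"
  assumes f0_meas: "f0 \<in> borel_measurable borel"
    and Lam_prob: "prob_space Lam" and Lam_sets: "sets Lam = sets borel"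
    and Lam_int: "integrable Lam (\<lambda>w. w)" and Lam_mean: "(\<integral>w. w \<partial>Lam) = 0"
    and Lam_sq: "integrable Lam (\<lambda>w. (norm w)\<^sup>2)"
    and Q0_prob: "\<And>Q. Q \<in> Q0 \<Longrightarrow> prob_space Q \<and> sets Q = sets borel"
    and f0_sq: "(SUP P\<in>P0. \<integral>\<^sup>+ w. ennreal ((f0 (obsX w))\<^sup>2) \<partial>P) < \<infinity>"
    and Qtr_in: "Qtr \<in> Q0"
    and Qtr_int: "integrable Qtr (\<lambda>z. z)" and Qtr_mean: "(\<integral>z. z \<partial>Qtr) = 0"
    and Qtr_int2: "\<And>i j. integrable Qtr (\<lambda>z. z $ i * z $ j)"
    and Qtr_pd: "\<And>a. a \<noteq> 0 \<Longrightarrow>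
        a \<bullet> ((\<chi> i j. \<integral>z. z $ i * z $ j \<partial>Qtr) *v a) > 0"
    and R_def: "(rank M0 < CARD('p) \<and> CARD('k) = CARD('p) - rank M0
                  \<and> (\<forall>i j. column i R \<bullet> column j R = (if i = j then 1 else 0))
                  \<and> span (columns R) = {x. transpose M0 *v x = 0})
              \<or> (rank M0 = CARD('p) \<and> CARD('k) = 1 \<and> R = 0)"
    and \<gamma>0_meas: "\<gamma>0 \<in> borel_measurable borel"
    and \<gamma>0_def: "AE w in Ptr. \<gamma>0 (obsV w) = cond_exp_given Ptr obsV obsU w"
    and F_meas: "F \<subseteq> borel_measurable borel"
    and h_meas: "h \<in> borel_measurable borel"
    and h_def: "AE w in Ptr. h (transpose R *v obsX w)
                  = cond_exp_given Ptr (\<lambda>w. transpose R *v obsX w) (\<lambda>w. \<gamma>0 (obsV w)) w"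
    and fstar_def: "AE w in Ptr. fstar (obsX w) = f0 (obsX w) + h (transpose R *v obsX w)"
    and fstar_I0: "fstar \<in> I0"
    and cond_i: "\<And>f g P. f \<in> F \<Longrightarrow> g \<in> F \<Longrightarrow> P \<in> P0 \<Longrightarrow>
        (AE w in Ptr. f (obsX w) = g (obsX w)) \<Longrightarrow> (AE w in P. f (obsX w) = g (obsX w))"
    and cond_ii: "(INF P\<in>P0. \<integral>\<^sup>+ w. ennreal ((cond_exp_given P (\<lambda>w. transpose R *v obsX w) (\<lambda>w. \<gamma>0 (obsV w)) w
                      - cond_exp_given P obsX (\<lambda>w. \<gamma>0 (obsV w)) w)\<^sup>2) \<partial>P) = 0"
  shows "risk Ptr fstar = (INF f\<in>I0. risk Ptr f)"
proof -
  have Q0_borel: "prob_space Q" "sets Q = sets borel" if "Q \<in> Q0" for Q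
    using Q0_prob[OF that] by auto
  have "columns R \<subseteq> {x. transpose M0 *v x = 0}"
    using R_def span_superset[of "columns R"] by (auto simp: columns_def column_def zero_vec_def[symmetric])
  then have R_M0: "transpose R *v (M0 *v z) = 0" for z
    by (rule transpose_mult_eq_0_if_columns_in_kernel)
  interpret simdg_bcf f0 M0 Lam Qtr \<gamma>0 R h fstar
    using f0_meas Lam_prob Lam_sets Lam_sq Q0_borel[OF Qtr_in] \<gamma>0_meas R_M0 h_meas
      \<gamma>0_def[unfolded Ptr_def] h_def[unfolded Ptr_def] fstar_def[unfolded Ptr_def]
    by (simp add: simdg_bcf_def simdg_bcf_axioms_def simdg_training_def simdg_training_axioms_def simdg_def)
  have "risk Ptr fstar \<le> risk Ptr f" if "f \<in> I0" for f
  proof (rule ennreal_le_if_le_add_INF_zero[OF _ cond_ii])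
    fix P assume "P \<in> P0"
    then obtain Q where "Q \<in> Q0" "P = law Q"
      unfolding P0_def by auto
    then show "risk Ptr fstar \<le> risk Ptr f + (\<integral>\<^sup>+w. ennreal ((cond_exp_given P (\<lambda>w. transpose R *v obsX w)
        (\<lambda>w. \<gamma>0 (obsV w)) w - cond_exp_given P obsX (\<lambda>w. \<gamma>0 (obsV w)) w)\<^sup>2) \<partial>P)"
      using \<open>f \<in> I0\<close> F_meas Q0_borel[of Q] risk_fstar_le[of Q f]
      unfolding I0_def Ptr_def invariant_fun_def by auto
  qed
  then show ?thesis
    by (intro antisym INF_greatest INF_lower fstar_I0)
qed

end
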